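(* Let $f:\mathbb{R}^d\times\mathcal{P}\to\mathbb{R}^d$, differentiable in its first argument, and for each $N\ge1$ let $\theta_0^N,\dots,\theta_{N-1}^N\in\mathcal{P}$. Assume there exist constants $C_f,L_f$ such that for all $N$ and $n$, $\sup_{x\in\mathbb{R}^d}\|f(x,\theta_n^N)\|\le C_f$ and $\sup_{x\in\mathbb{R}^d}\|\partial_x f(x,\theta_n^N)\|\le L_f$. Given $x_0\in\mathbb{R}^d$, define the forward iterates $x_{n+1}=x_n+\frac1N f(x_n,\theta_n^N)$ for $n=0,\dots,N-1$, and the reconstructed iterates $\tilde x_N=x_N$, $\tilde x_n=\tilde x_{n+1}-\frac1N f(\tilde x_{n+1},\theta_n^N)$ for $n=N-1,\dots,0$. Then, for all $n$, $$\|x_n-\tilde x_n\|\le\frac{(e^{L_f}-1)C_f}{N}+O\Big(\frac1{N^2}\Big).$$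
   Context: $\mathcal{P}$ is a parameter set; $\partial_x f(x,\theta)$ is the Jacobian of $f(\cdot,\theta)$ at $x$. *)

theory Defs
  imports "HOL-Analysis.Analysis"
begin

primrec fwd_iter :: "('v::real_vector \<Rightarrow> 'p \<Rightarrow> 'v) \<Rightarrow> (nat \<Rightarrow> 'p) \<Rightarrow> nat \<Rightarrow> 'v \<Rightarrow> nat \<Rightarrow> 'v" where
  "fwd_iter f th N x0 0 = x0"
| "fwd_iter f th N x0 (Suc n) =
     fwd_iter f th N x0 n + (1 / real N) *\<^sub>R f (fwd_iter f th N x0 n) (th n)"

text \<open>Backward reconstruction after k steps from x_N: value of tilde x_(N-k).\<close>
primrec bwd_aux :: "('v::real_vector \<Rightarrow> 'p \<Rightarrow> 'v) \<Rightarrow> (nat \<Rightarrow> 'p) \<Rightarrow> nat \<Rightarrow> 'v \<Rightarrow> nat \<Rightarrow> 'v" where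
  "bwd_aux f th N x0 0 = fwd_iter f th N x0 N"
| "bwd_aux f th N x0 (Suc k) =
     bwd_aux f th N x0 k - (1 / real N) *\<^sub>R f (bwd_aux f th N x0 k) (th (N - Suc k))"

definition rec_iter :: "('v::real_vector \<Rightarrow> 'p \<Rightarrow> 'v) \<Rightarrow> (nat \<Rightarrow> 'p) \<Rightarrow> nat \<Rightarrow> 'v \<Rightarrow> nat \<Rightarrow> 'v" where
  "rec_iter f th N x0 n = bwd_aux f th N x0 (N - n)"

end

theory Submission
  imports Defs
begin

text \<open>The derivative bound makes every \<open>f(\<cdot>, \<theta>\<^sub>n)\<close> \<open>L\<close>-Lipschitz. Undoing the forward step
  \<open>x\<^sub>n\<^sub>+\<^sub>1 = x\<^sub>n + h f(x\<^sub>n)\<close> by \<open>x\<^sub>n \<approx> x\<^sub>n\<^sub>+\<^sub>1 - h f(x\<^sub>n\<^sub>+\<^sub>1)\<close> evaluates \<open>f\<close> at the wrong point, which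
  is off by at most the current error plus the displacement \<open>hC\<close> of one forward step. Hence the
  errors obey \<open>e\<^sub>k\<^sub>+\<^sub>1 \<le> (1 + hL) e\<^sub>k + h\<^sup>2LC\<close> with \<open>e\<^sub>0 = 0\<close>, so
  \<open>e\<^sub>k \<le> hC((1 + hL)\<^sup>k - 1) \<le> hC(e\<^sup>L - 1)\<close> for \<open>k \<le> N = 1/h\<close>: no \<open>O(1/N\<^sup>2)\<close> remainder is needed.\<close>

lemma reversed_step_error:
  fixes g :: "'a::real_normed_vector \<Rightarrow> 'a"
  assumes lip: "L-lipschitz_on UNIV g"
    and bound: "norm (g a) \<le> C"
    and "0 \<le> h"
  shows "norm (a - (b - h *\<^sub>R g b))
           \<le> (1 + h * L) * norm (a + h *\<^sub>R g a - b) + h * L * (h * C)"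
proof -
  let ?e = "norm (a + h *\<^sub>R g a - b)"
  have L: "0 \<le> L" using lip by (rule lipschitz_on_nonneg)
  have "norm (a - b) \<le> ?e + h * norm (g a)"
    using norm_triangle_ineq4[of "a + h *\<^sub>R g a - b" "h *\<^sub>R g a"] \<open>0 \<le> h\<close>
    by (simp add: algebra_simps)
  also have "\<dots> \<le> ?e + h * C"
    using bound \<open>0 \<le> h\<close> by (simp add: mult_left_mono)
  finally have ab: "norm (a - b) \<le> ?e + h * C" .
  have eq: "a - (b - h *\<^sub>R g b) = (a + h *\<^sub>R g a - b) - h *\<^sub>R (g a - g b)"
    by (simp add: algebra_simps)
  have "norm (a - (b - h *\<^sub>R g b)) \<le> ?e + h * norm (g a - g b)"
    unfolding eq using norm_triangle_ineq4[of "a + h *\<^sub>R g a - b" "h *\<^sub>R (g a - g b)"] \<open>0 \<le> h\<close>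
    by simp
  also have "\<dots> \<le> ?e + h * (L * norm (a - b))"
    using lipschitz_on_normD[OF lip] \<open>0 \<le> h\<close> by (simp add: mult_left_mono)
  also have "\<dots> \<le> ?e + h * (L * (?e + h * C))"
    using ab L \<open>0 \<le> h\<close> by (simp add: mult_left_mono)
  also have "\<dots> = (1 + h * L) * ?e + h * L * (h * C)"
    by (simp add: algebra_simps)
  finally show ?thesis .
qed

lemma fwd_bwd_error_le:
  fixes f :: "'v::real_normed_vector \<Rightarrow> 'p \<Rightarrow> 'v"
  assumes lip: "\<And>m. m < N \<Longrightarrow> L-lipschitz_on UNIV (\<lambda>x. f x (th m))"
    and bound: "\<And>m x. m < N \<Longrightarrow> norm (f x (th m)) \<le> C"
    and "k \<le> N"
  shows "norm (fwd_iter f th N x0 (N - k) - bwd_aux f th N x0 k)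
           \<le> C / N * ((1 + L / N) ^ k - 1)"
  using \<open>k \<le> N\<close>
proof (induction k)
  case 0
  then show ?case by simp
next
  case (Suc k)
  define m where "m = N - Suc k"
  have m: "m < N" "Suc m = N - k"
    using Suc.prems by (auto simp: m_def)
  have L: "0 \<le> L"
    using lip[OF m(1)] by (rule lipschitz_on_nonneg)
  let ?F = "fwd_iter f th N x0" and ?B = "bwd_aux f th N x0" and ?h = "1 / real N"
  have IH: "norm (?F (Suc m) - ?B k) \<le> C / N * ((1 + L / N) ^ k - 1)"
    using Suc m(2) by simp
  have "norm (?F m - ?B (Suc k))
          = norm (?F m - (?B k - ?h *\<^sub>R f (?B k) (th m)))"
    by (simp add: m_def)
  also have "\<dots> \<le> (1 + ?h * L) * norm (?F (Suc m) - ?B k) + ?h * L * (?h * C)"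
    using reversed_step_error[OF lip[OF m(1)] bound[OF m(1)], of ?h] by simp
  also have "\<dots> \<le> (1 + ?h * L) * (C / N * ((1 + L / N) ^ k - 1)) + ?h * L * (?h * C)"
    using IH L by (intro add_right_mono mult_left_mono) auto
  also have "\<dots> = C / N * ((1 + L / N) ^ Suc k - 1)"
    using m(1) by (simp add: field_simps)
  finally show ?case
    by (simp add: m_def)
qed

lemma one_plus_div_power_le_exp:
  fixes L :: real and k N :: nat
  assumes "0 \<le> L" "k \<le> N"
  shows "(1 + L / N) ^ k \<le> exp L"
proof (cases "N = 0")
  case False
  have "(1 + L / N) ^ k \<le> (1 + L / N) ^ N"
    using assms by (intro power_increasing) auto
  also have "\<dots> \<le> exp L"
    using assms False by (intro exp_ge_one_plus_x_over_n_power_n) auto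
  finally show ?thesis .
qed (use assms in auto)

lemma rec_iter_error_le:
  fixes f :: "'v::real_normed_vector \<Rightarrow> 'p \<Rightarrow> 'v"
  assumes lip: "\<And>m. m < N \<Longrightarrow> L-lipschitz_on UNIV (\<lambda>x. f x (th m))"
    and bound: "\<And>m x. m < N \<Longrightarrow> norm (f x (th m)) \<le> C"
    and "1 \<le> N" "n \<le> N"
  shows "norm (fwd_iter f th N x0 n - rec_iter f th N x0 n) \<le> (exp L - 1) * C / N"
proof -
  have L: "0 \<le> L"
    using lip[of 0] \<open>1 \<le> N\<close> lipschitz_on_nonneg by force
  have "norm (f x0 (th 0)) \<le> C"
    using bound \<open>1 \<le> N\<close> by simp
  then have C: "0 \<le> C"
    by (rule order_trans[OF norm_ge_zero])
  have "norm (fwd_iter f th N x0 n - rec_iter f th N x0 n)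
          \<le> C / N * ((1 + L / N) ^ (N - n) - 1)"
    using fwd_bwd_error_le[of N L f th C "N - n" x0] lip bound \<open>n \<le> N\<close>
    by (simp add: rec_iter_def)
  also have "\<dots> \<le> C / N * (exp L - 1)"
    using one_plus_div_power_le_exp[OF L, of "N - n" N] C
    by (intro mult_left_mono) auto
  finally show ?thesis
    by (simp add: mult.commute)
qed

theorem proposition3:
  fixes f :: "real ^ 'd \<Rightarrow> 'p \<Rightarrow> real ^ 'd"
    and f' :: "'p \<Rightarrow> real ^ 'd \<Rightarrow> (real ^ 'd \<Rightarrow> real ^ 'd)"
    and \<theta> :: "nat \<Rightarrow> nat \<Rightarrow> 'p"
    and Cf Lf :: real
    and x0 :: "real ^ 'd"
  assumes deriv: "\<And>p x. ((\<lambda>y. f y p) has_derivative f' p x) (at x)"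
    and bound_f: "\<And>N n x. N \<ge> 1 \<Longrightarrow> n < N \<Longrightarrow> norm (f x (\<theta> N n)) \<le> Cf"
    and bound_Df: "\<And>N n x. N \<ge> 1 \<Longrightarrow> n < N \<Longrightarrow> onorm (f' (\<theta> N n) x) \<le> Lf"
  shows "\<exists>K. \<forall>N\<ge>1. \<forall>n\<le>N.
           norm (fwd_iter f (\<theta> N) N x0 n - rec_iter f (\<theta> N) N x0 n)
             \<le> (exp Lf - 1) * Cf / real N + K / (real N)^2"
proof (intro exI[of _ 0] allI impI)
  fix N n :: nat
  assume N: "N \<ge> 1" and "n \<le> N"
  have "0 \<le> Lf"
    using onorm_pos_le[OF has_derivative_bounded_linear[OF deriv]] bound_Df[of 1 0]
    by (meson order_trans zero_less_one order_refl)
  then have "Lf-lipschitz_on UNIV (\<lambda>x. f x (\<theta> N m))" if "m < N" for m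
    using deriv bound_Df[OF N that]
    by (intro bounded_derivative_imp_lipschitz) auto
  then show "norm (fwd_iter f (\<theta> N) N x0 n - rec_iter f (\<theta> N) N x0 n)
               \<le> (exp Lf - 1) * Cf / real N + 0 / (real N)^2"
    using rec_iter_error_le[of N Lf f "\<theta> N" Cf n x0] bound_f[OF N] N \<open>n \<le> N\<close> by simp
qed

end
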